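(* Let $n\ge3$, $2\le k$, $1\le m<k$ be integers, let $0<\varepsilon\le\frac{1}{8(n-1)}$, let $\beta\in(0,1)$, and let $0<\delta\le\frac{k-m}{k}(1-\beta)$. Let $\mathcal{A}$ be any algorithm for the best arm retention problem that retains $m$ out of $k$ arms, has an almost surely finite stopping time, and is $(\varepsilon,\delta)$-PAC on the instance family $\mathcal{I}_0$. Then its total number of samples $T$ on input $\rho_1$ satisfies $$\mathbb{E}_{\rho_1}[T]\ge\frac{\beta}{32}\cdot\frac{k-m-\delta}{\varepsilon^2}\log\frac{k-m-\delta}{(k-1)\delta}.$$
   Context: Best arm retention (BAR): an algorithm is given $k$ Bernoulli arms, adaptively samples (pulls) arms one at a time, stops at a stopping time $T$, and outputs ("retains") a set of exactly $m$ of the $k$ arms. It is called $(\varepsilon,\delta)$-PAC on a family of instances if on every instance of the family it retains the best arm with probability at least $1-\delta$. The family $\mathcal{I}_0=\{\rho_1,\dots,\rho_k\}$: $\rho_1$ has arm 1 with mean $\frac12+n\varepsilon$ and arms $2,\dots,k$ with mean $\frac12+(n-1)\varepsilon$; for $2\le i\le k$, $\rho_i$ equals $\rho_1$ except that arm $i$ has mean $\frac12+(n+1)\varepsilon$. $\mathbb{E}_{\rho_1}$ denotes expectation when the algorithm runs on $\rho_1$. *)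

theory Defs
  imports "HOL-Probability.Probability"
begin

text \<open>Arms are indexed by 1..k. A history is the list of (arm pulled, observed reward).
  A (possibly randomised) adaptive algorithm is a policy mapping each history to a
  distribution over actions: pull an arm, or stop and retain a set of arms.\<close>

datatype action = Pull nat | Stop "nat set"

type_synonym history = "(nat \<times> bool) list"
type_synonym state = "history \<times> nat set option"
type_synonym policy = "history \<Rightarrow> action pmf"

definition step :: "(nat \<Rightarrow> real) \<Rightarrow> policy \<Rightarrow> state \<Rightarrow> state pmf" where
  "step \<mu> pol s = (case s of
      (h, Some S) \<Rightarrow> return_pmf (h, Some S)
    | (h, None) \<Rightarrow> bind_pmf (pol h) (\<lambda>a. case a of
          Stop S \<Rightarrow> return_pmf (h, Some S)
        | Pull i \<Rightarrow> map_pmf (\<lambda>r. (h @ [(i, r)], None)) (bernoulli_pmf (\<mu> i))))"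

definition run :: "(nat \<Rightarrow> real) \<Rightarrow> policy \<Rightarrow> nat \<Rightarrow> state pmf" where
  "run \<mu> pol N = ((\<lambda>p. bind_pmf p (step \<mu> pol)) ^^ N) (return_pmf ([], None))"

definition valid_policy :: "nat \<Rightarrow> nat \<Rightarrow> policy \<Rightarrow> bool" where
  "valid_policy k m pol \<longleftrightarrow> (\<forall>h. \<forall>a \<in> set_pmf (pol h). case a of
       Pull i \<Rightarrow> i \<in> {1..k}
     | Stop S \<Rightarrow> S \<subseteq> {1..k} \<and> card S = m)"

definition stops_as :: "(nat \<Rightarrow> real) \<Rightarrow> policy \<Rightarrow> bool" where
  "stops_as \<mu> pol \<longleftrightarrow>
     (\<lambda>N. measure_pmf.prob (run \<mu> pol N) {s. snd s \<noteq> None}) \<longlonglongrightarrow> 1"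

definition retain_prob :: "(nat \<Rightarrow> real) \<Rightarrow> policy \<Rightarrow> nat \<Rightarrow> real" where
  "retain_prob \<mu> pol b =
     (SUP N. measure_pmf.prob (run \<mu> pol N) {s. \<exists>S. snd s = Some S \<and> b \<in> S})"

text \<open>Number of samples T: T > t iff the algorithm has not stopped after t+1 decisions
  (each non-stopping decision is one pull). E[T] = sum over t of P(T > t).\<close>
definition expected_T :: "(nat \<Rightarrow> real) \<Rightarrow> policy \<Rightarrow> ennreal" where
  "expected_T \<mu> pol =
     (\<Sum>t. ennreal (measure_pmf.prob (run \<mu> pol (Suc t)) {s. snd s = None}))"

definition rho :: "nat \<Rightarrow> real \<Rightarrow> nat \<Rightarrow> nat \<Rightarrow> real" where
  "rho n \<epsilon> i j =
     (if j = 1 then 1/2 + real n * \<epsilon>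
      else if j = i then 1/2 + (real n + 1) * \<epsilon>
      else 1/2 + (real n - 1) * \<epsilon>)"

definition PAC_I0 :: "nat \<Rightarrow> nat \<Rightarrow> real \<Rightarrow> real \<Rightarrow> policy \<Rightarrow> bool" where
  "PAC_I0 k n \<epsilon> \<delta> pol \<longleftrightarrow> (\<forall>i \<in> {1..k}. retain_prob (rho n \<epsilon> i) pol i \<ge> 1 - \<delta>)"

end

theory Submission
  imports Defs
begin

text \<open>For \<open>i \<ge> 2\<close> the instances \<open>\<rho>\<^sub>1\<close> and \<open>\<rho>\<^sub>i\<close> differ only in arm \<open>i\<close>, so by the chain rule for
  relative entropy the binary divergence between the probabilities of discarding arm \<open>i\<close> under
  \<open>\<rho>\<^sub>1\<close> and under \<open>\<rho>\<^sub>i\<close> is at most \<open>KL(\<rho>\<^sub>1(i), \<rho>\<^sub>i(i)) \<le> 16 \<epsilon>\<^sup>2\<close> times the expected number of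
  pulls of arm \<open>i\<close> under \<open>\<rho>\<^sub>1\<close>. Under \<open>\<rho>\<^sub>i\<close> arm \<open>i\<close> is discarded with probability at most \<open>\<delta>\<close>,
  while under \<open>\<rho>\<^sub>1\<close> the \<open>k - 1\<close> suboptimal arms are discarded at least \<open>k - m - \<delta>\<close> times on average.
  Bounding the divergence from below by its tangent in the first argument at
  \<open>\<alpha> = (k - m - \<delta>) / (k - 1)\<close> and summing over \<open>i\<close> yields the bound for the number of pulls up to
  any horizon \<open>N\<close>; letting \<open>N \<rightarrow> \<infinity>\<close> gives the bound on \<open>E[T]\<close>. The hypothesis on \<open>\<delta>\<close> makes
  \<open>\<alpha> / \<delta> \<ge> 1 / (1 - \<beta>)\<close>, which turns the resulting \<open>\<alpha> ln (\<alpha> / \<delta>) - \<alpha> + \<delta>\<close> into at least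
  \<open>\<beta> / 2 \<cdot> \<alpha> ln (\<alpha> / \<delta>)\<close>.\<close>

section \<open>Binary relative entropy\<close>

definition kl_term :: "real \<Rightarrow> real \<Rightarrow> real" where
  "kl_term x y = x * ln (x / y)"

definition kl_bernoulli :: "real \<Rightarrow> real \<Rightarrow> real" where
  "kl_bernoulli p q = kl_term p q + kl_term (1 - p) (1 - q)"

text \<open>Only under this condition is \<^const>\<open>kl_bernoulli\<close> the relative entropy of the two Bernoulli
  distributions; otherwise \<open>x / 0 = 0\<close> and \<open>ln 0 = 0\<close> produce junk values.\<close>
definition bernoulli_abs_cont :: "real \<Rightarrow> real \<Rightarrow> bool" where
  "bernoulli_abs_cont p q \<longleftrightarrow>
     0 \<le> p \<and> p \<le> 1 \<and> 0 \<le> q \<and> q \<le> 1 \<and> (q = 0 \<longrightarrow> p = 0) \<and> (q = 1 \<longrightarrow> p = 1)"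

lemma ln_ge_one_minus_inverse: "0 < t \<Longrightarrow> 1 - 1 / t \<le> ln (t::real)"
  using ln_le_minus_one[of "1 / t"] by (simp add: ln_div)

lemma kl_term_ge_tangent:
  assumes "0 \<le> x" "0 \<le> y" "y = 0 \<longrightarrow> x = 0" "0 < a" "0 < b"
  shows "x * ln (a / b) + x - y * a / b \<le> kl_term x y"
proof (cases "x = 0")
  case True
  then show ?thesis using assms by (simp add: kl_term_def)
next
  case False
  then have x: "0 < x" and y: "0 < y" using assms by auto
  have "1 - y * a / (x * b) \<le> ln (x * b / (y * a))"
    using ln_ge_one_minus_inverse[of "x * b / (y * a)"] x y assms by simp
  also have "\<dots> = ln (x / y) - ln (a / b)"
    using x y assms by (simp add: ln_div ln_mult)
  finally have "x * (1 - y * a / (x * b)) \<le> x * (ln (x / y) - ln (a / b))"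
    using x by (intro mult_left_mono) auto
  then show ?thesis using x assms by (simp add: kl_term_def algebra_simps)
qed

lemma kl_term_ge_diff: "0 \<le> x \<Longrightarrow> 0 \<le> y \<Longrightarrow> (y = 0 \<longrightarrow> x = 0) \<Longrightarrow> x - y \<le> kl_term x y"
  using kl_term_ge_tangent[of x y 1 1] by simp

lemma kl_bernoulli_nonneg: "bernoulli_abs_cont p q \<Longrightarrow> 0 \<le> kl_bernoulli p q"
  using kl_term_ge_diff[of p q] kl_term_ge_diff[of "1 - p" "1 - q"]
  by (simp add: kl_bernoulli_def bernoulli_abs_cont_def)

lemma kl_bernoulli_same [simp]: "kl_bernoulli p p = 0"
  by (simp add: kl_bernoulli_def kl_term_def)

lemma log_sum_inequality:
  assumes "0 \<le> x1" "0 \<le> x0" "0 \<le> y1" "0 \<le> y0" "y1 = 0 \<longrightarrow> x1 = 0" "y0 = 0 \<longrightarrow> x0 = 0"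
  shows "kl_term (x1 + x0) (y1 + y0) \<le> kl_term x1 y1 + kl_term x0 y0"
proof (cases "x1 + x0 = 0")
  case True
  then have "x1 = 0" "x0 = 0" using assms by auto
  then show ?thesis by (simp add: kl_term_def)
next
  case False
  then have x: "0 < x1 + x0" and y: "0 < y1 + y0" using assms by auto
  have "(x1 + x0) * ln ((x1 + x0) / (y1 + y0)) + (x1 + x0) - (y1 + y0) * (x1 + x0) / (y1 + y0)
        \<le> kl_term x1 y1 + kl_term x0 y0"
    using kl_term_ge_tangent[of x1 y1 "x1 + x0" "y1 + y0"]
      kl_term_ge_tangent[of x0 y0 "x1 + x0" "y1 + y0"] assms x y
    by (simp add: add_divide_distrib distrib_right)
  then show ?thesis using y by (simp add: kl_term_def)
qed

lemma kl_term_mult: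
  assumes "0 < p" "0 < q" "0 \<le> x" "0 \<le> y" "y = 0 \<longrightarrow> x = 0"
  shows "kl_term (p * x) (q * y) = p * x * ln (p / q) + p * kl_term x y"
proof (cases "x = 0")
  case False
  then have "0 < x" "0 < y" using assms by auto
  then show ?thesis using assms by (simp add: kl_term_def ln_div ln_mult algebra_simps)
qed (simp add: kl_term_def)

lemma kl_bernoulli_mixture_le:
  assumes p: "0 < p" "p < 1" and q: "0 < q" "q < 1"
    and ac: "bernoulli_abs_cont x1 y1" "bernoulli_abs_cont x0 y0"
  shows "kl_bernoulli (p * x1 + (1 - p) * x0) (q * y1 + (1 - q) * y0)
           \<le> kl_bernoulli p q + p * kl_bernoulli x1 y1 + (1 - p) * kl_bernoulli x0 y0"
proof -
  have c: "1 - (p * x1 + (1 - p) * x0) = p * (1 - x1) + (1 - p) * (1 - x0)"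
          "1 - (q * y1 + (1 - q) * y0) = q * (1 - y1) + (1 - q) * (1 - y0)"
    by (simp_all add: algebra_simps)
  have "kl_term (p * x1 + (1 - p) * x0) (q * y1 + (1 - q) * y0)
        \<le> kl_term (p * x1) (q * y1) + kl_term ((1 - p) * x0) ((1 - q) * y0)"
    by (rule log_sum_inequality) (use p q ac in \<open>auto simp: bernoulli_abs_cont_def\<close>)
  moreover have "kl_term (p * (1 - x1) + (1 - p) * (1 - x0)) (q * (1 - y1) + (1 - q) * (1 - y0))
        \<le> kl_term (p * (1 - x1)) (q * (1 - y1)) + kl_term ((1 - p) * (1 - x0)) ((1 - q) * (1 - y0))"
    by (rule log_sum_inequality) (use p q ac in \<open>auto simp: bernoulli_abs_cont_def\<close>)
  moreover have
    "kl_term (p * x1) (q * y1) = p * x1 * ln (p / q) + p * kl_term x1 y1"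
    "kl_term ((1 - p) * x0) ((1 - q) * y0) = (1 - p) * x0 * ln ((1 - p) / (1 - q)) + (1 - p) * kl_term x0 y0"
    "kl_term (p * (1 - x1)) (q * (1 - y1)) = p * (1 - x1) * ln (p / q) + p * kl_term (1 - x1) (1 - y1)"
    "kl_term ((1 - p) * (1 - x0)) ((1 - q) * (1 - y0))
       = (1 - p) * (1 - x0) * ln ((1 - p) / (1 - q)) + (1 - p) * kl_term (1 - x0) (1 - y0)"
    by (rule kl_term_mult; use p q ac in \<open>auto simp: bernoulli_abs_cont_def\<close>)+
  ultimately show ?thesis
    unfolding kl_bernoulli_def c by (simp add: kl_term_def algebra_simps)
qed

lemma bernoulli_abs_cont_mixture:
  assumes p: "0 \<le> p" "p \<le> 1" and q: "0 < q" "q < 1"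
    and ac: "bernoulli_abs_cont x1 y1" "bernoulli_abs_cont x0 y0"
  shows "bernoulli_abs_cont (p * x1 + (1 - p) * x0) (q * y1 + (1 - q) * y0)"
proof -
  have bounds: "0 \<le> p * x1 + (1 - p) * x0" "p * x1 + (1 - p) * x0 \<le> 1"
    "0 \<le> q * y1 + (1 - q) * y0" "q * y1 + (1 - q) * y0 \<le> 1"
    using ac p q unfolding bernoulli_abs_cont_def by (auto intro: convex_bound_le)
  have "y1 = 0 \<and> y0 = 0" if "q * y1 + (1 - q) * y0 = 0"
    using that ac q unfolding bernoulli_abs_cont_def
    by (smt (verit) mult_nonneg_nonneg mult_pos_pos)
  moreover have "y1 = 1 \<and> y0 = 1" if "q * y1 + (1 - q) * y0 = 1"
  proof -
    have "q * (1 - y1) + (1 - q) * (1 - y0) = 0" using that by (simp add: algebra_simps)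
    then show ?thesis using ac q unfolding bernoulli_abs_cont_def
      by (smt (verit) mult_nonneg_nonneg mult_pos_pos)
  qed
  ultimately show ?thesis
    using bounds ac unfolding bernoulli_abs_cont_def by (auto simp: algebra_simps)
qed

lemma integrable_pmf_bounded:
  fixes f :: "'a \<Rightarrow> real"
  assumes "\<And>x. x \<in> set_pmf p \<Longrightarrow> \<bar>f x\<bar> \<le> B"
  shows "integrable (measure_pmf p) f"
  by (rule measure_pmf.integrable_const_bound[where B=B]) (use assms in \<open>auto simp: AE_measure_pmf_iff\<close>)

lemma integral_pmf_bounds:
  fixes f :: "'a \<Rightarrow> real"
  assumes "\<And>x. x \<in> set_pmf p \<Longrightarrow> a \<le> f x \<and> f x \<le> b"
  shows "a \<le> (\<integral>x. f x \<partial>p) \<and> (\<integral>x. f x \<partial>p) \<le> b"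
proof -
  have "integrable p f" by (rule integrable_pmf_bounded[where B="\<bar>a\<bar> + \<bar>b\<bar>"]) (use assms in force)
  then show ?thesis using assms
    by (auto intro!: measure_pmf.integral_ge_const measure_pmf.integral_le_const simp: AE_measure_pmf_iff)
qed

lemma integral_pmf_eq_0_iff:
  fixes f :: "'a \<Rightarrow> real"
  assumes "\<And>x. x \<in> set_pmf p \<Longrightarrow> 0 \<le> f x \<and> f x \<le> B"
  shows "(\<integral>x. f x \<partial>p) = 0 \<longleftrightarrow> (\<forall>x\<in>set_pmf p. f x = 0)"
proof -
  have "integrable (measure_pmf p) f" by (rule integrable_pmf_bounded[where B=B]) (use assms in force)
  then show ?thesis using integral_nonneg_eq_0_iff_AE[of p f] assms by (auto simp: AE_measure_pmf_iff)
qed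

lemma integral_bind_pmf_bounded:
  fixes f :: "'b \<Rightarrow> real"
  assumes "\<And>x. \<bar>f x\<bar> \<le> B"
  shows "(\<integral>x. f x \<partial>bind_pmf M N) = (\<integral>x. (\<integral>y. f y \<partial>N x) \<partial>M)"
  unfolding measure_pmf_bind
  by (rule integral_bind[where K="count_space UNIV" and B=B and B'=1])
    (use assms in \<open>auto intro!: measure_pmf_in_subprob_algebra\<close>)

lemma prob_bind_pmf:
  "measure_pmf.prob (bind_pmf M N) A = (\<integral>x. measure_pmf.prob (N x) A \<partial>M)"
  using integral_bind_pmf_bounded[of "indicator A" 1 M N] by simp

lemma kl_term_integral_le:
  fixes w :: "'a pmf" and u v :: "'a \<Rightarrow> real"
  assumes uv: "\<And>a. a \<in> set_pmf w \<Longrightarrow> 0 \<le> u a \<and> u a \<le> 1 \<and> 0 \<le> v a \<and> v a \<le> 1 \<and> (v a = 0 \<longrightarrow> u a = 0)"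
    and bounded: "\<And>a. a \<in> set_pmf w \<Longrightarrow> \<bar>kl_term (u a) (v a)\<bar> \<le> B"
  shows "kl_term (\<integral>a. u a \<partial>w) (\<integral>a. v a \<partial>w) \<le> (\<integral>a. kl_term (u a) (v a) \<partial>w)"
proof -
  define U V where "U = (\<integral>a. u a \<partial>w)" and "V = (\<integral>a. v a \<partial>w)"
  have iu: "integrable w u" and iv: "integrable w v"
    by (rule integrable_pmf_bounded[where B=1], use uv in force)+
  have ikl: "integrable w (\<lambda>a. kl_term (u a) (v a))"
    by (rule integrable_pmf_bounded[where B=B]) (use bounded in force)
  have U0: "U = 0 \<longleftrightarrow> (\<forall>a\<in>set_pmf w. u a = 0)" and V0: "V = 0 \<longleftrightarrow> (\<forall>a\<in>set_pmf w. v a = 0)"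
    unfolding U_def V_def by (rule integral_pmf_eq_0_iff[where B=1], use uv in force)+
  show ?thesis
  proof (cases "U = 0")
    case True
    then have "(\<integral>a. kl_term (u a) (v a) \<partial>w) = (\<integral>a. 0 \<partial>w)"
      using U0 by (intro integral_cong_AE) (auto simp: AE_measure_pmf_iff kl_term_def)
    then show ?thesis using True unfolding U_def by (simp add: kl_term_def)
  next
    case False
    have "0 \<le> U" "0 \<le> V" unfolding U_def V_def using uv by (auto intro!: integral_nonneg_AE simp: AE_measure_pmf_iff)
    moreover have "V \<noteq> 0" using False U0 V0 uv by auto
    ultimately have U: "0 < U" and V: "0 < V" using False by auto
    have "kl_term U V = (\<integral>a. u a * ln (U / V) + u a - v a * U / V \<partial>w)"
      using iu iv V unfolding U_def V_def by (simp add: kl_term_def)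
    also have "\<dots> \<le> (\<integral>a. kl_term (u a) (v a) \<partial>w)"
      using iu iv ikl kl_term_ge_tangent[OF _ _ _ U V] uv
      by (intro integral_mono_AE) (auto simp: AE_measure_pmf_iff)
    finally show ?thesis unfolding U_def V_def .
  qed
qed

lemma kl_bernoulli_integral_le:
  fixes w :: "'a pmf" and X Y :: "'a \<Rightarrow> real"
  assumes ac: "\<And>a. a \<in> set_pmf w \<Longrightarrow> bernoulli_abs_cont (X a) (Y a)"
    and bounded: "\<And>a. a \<in> set_pmf w \<Longrightarrow> kl_bernoulli (X a) (Y a) \<le> B"
  shows "kl_bernoulli (\<integral>a. X a \<partial>w) (\<integral>a. Y a \<partial>w) \<le> (\<integral>a. kl_bernoulli (X a) (Y a) \<partial>w)"
proof -
  have terms_bounded: "\<bar>kl_term (X a) (Y a)\<bar> \<le> B + 1 \<and> \<bar>kl_term (1 - X a) (1 - Y a)\<bar> \<le> B + 1"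
    if a: "a \<in> set_pmf w" for a
    using kl_term_ge_diff[of "X a" "Y a"] kl_term_ge_diff[of "1 - X a" "1 - Y a"] ac[OF a] bounded[OF a]
    unfolding kl_bernoulli_def bernoulli_abs_cont_def by auto
  have "integrable w X" "integrable w Y"
    by (rule integrable_pmf_bounded[where B=1], use ac in \<open>force simp: bernoulli_abs_cont_def\<close>)+
  then have "(\<integral>a. 1 - X a \<partial>w) = 1 - (\<integral>a. X a \<partial>w)" "(\<integral>a. 1 - Y a \<partial>w) = 1 - (\<integral>a. Y a \<partial>w)"
    by simp_all
  moreover have "integrable w (\<lambda>a. kl_term (X a) (Y a))" "integrable w (\<lambda>a. kl_term (1 - X a) (1 - Y a))"
    by (rule integrable_pmf_bounded[where B="B + 1"], use terms_bounded in force)+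
  moreover have "kl_term (\<integral>a. X a \<partial>w) (\<integral>a. Y a \<partial>w) \<le> (\<integral>a. kl_term (X a) (Y a) \<partial>w)"
    "kl_term (\<integral>a. 1 - X a \<partial>w) (\<integral>a. 1 - Y a \<partial>w) \<le> (\<integral>a. kl_term (1 - X a) (1 - Y a) \<partial>w)"
    by (rule kl_term_integral_le[where B="B + 1"];
        use ac terms_bounded in \<open>force simp: bernoulli_abs_cont_def\<close>)+
  ultimately show ?thesis unfolding kl_bernoulli_def by simp
qed

lemma bernoulli_abs_cont_integral:
  fixes w :: "'a pmf" and X Y :: "'a \<Rightarrow> real"
  assumes ac: "\<And>a. a \<in> set_pmf w \<Longrightarrow> bernoulli_abs_cont (X a) (Y a)"
  shows "bernoulli_abs_cont (\<integral>a. X a \<partial>w) (\<integral>a. Y a \<partial>w)"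
proof -
  have integrable: "integrable w X" "integrable w Y"
    by (rule integrable_pmf_bounded[where B=1], use ac in \<open>force simp: bernoulli_abs_cont_def\<close>)+
  then have complement: "(\<integral>a. 1 - X a \<partial>w) = 1 - (\<integral>a. X a \<partial>w)" "(\<integral>a. 1 - Y a \<partial>w) = 1 - (\<integral>a. Y a \<partial>w)"
    by simp_all
  have "(\<integral>a. X a \<partial>w) = 0 \<longleftrightarrow> (\<forall>a\<in>set_pmf w. X a = 0)" "(\<integral>a. Y a \<partial>w) = 0 \<longleftrightarrow> (\<forall>a\<in>set_pmf w. Y a = 0)"
    "(\<integral>a. 1 - X a \<partial>w) = 0 \<longleftrightarrow> (\<forall>a\<in>set_pmf w. 1 - X a = 0)"
    "(\<integral>a. 1 - Y a \<partial>w) = 0 \<longleftrightarrow> (\<forall>a\<in>set_pmf w. 1 - Y a = 0)"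
    by (rule integral_pmf_eq_0_iff[where B=1], use ac in \<open>force simp: bernoulli_abs_cont_def\<close>)+
  moreover have "0 \<le> (\<integral>a. X a \<partial>w)" "(\<integral>a. X a \<partial>w) \<le> 1" "0 \<le> (\<integral>a. Y a \<partial>w)" "(\<integral>a. Y a \<partial>w) \<le> 1"
    using ac integrable unfolding bernoulli_abs_cont_def
    by (auto intro!: integral_nonneg_AE measure_pmf.integral_le_const simp: AE_measure_pmf_iff)
  ultimately show ?thesis using ac unfolding complement bernoulli_abs_cont_def by auto
qed

lemma kl_bernoulli_integral_bound:
  fixes w :: "'a pmf" and X Y C :: "'a \<Rightarrow> real"
  assumes XY: "\<And>a. a \<in> set_pmf w \<Longrightarrow> bernoulli_abs_cont (X a) (Y a) \<and> kl_bernoulli (X a) (Y a) \<le> D * C a"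
    and C: "\<And>a. a \<in> set_pmf w \<Longrightarrow> 0 \<le> C a \<and> C a \<le> B" and "0 \<le> D"
  shows "bernoulli_abs_cont (\<integral>a. X a \<partial>w) (\<integral>a. Y a \<partial>w) \<and>
         kl_bernoulli (\<integral>a. X a \<partial>w) (\<integral>a. Y a \<partial>w) \<le> D * (\<integral>a. C a \<partial>w)"
proof
  show "bernoulli_abs_cont (\<integral>a. X a \<partial>w) (\<integral>a. Y a \<partial>w)"
    by (rule bernoulli_abs_cont_integral) (use XY in blast)
  have DC: "D * C a \<le> D * B" if "a \<in> set_pmf w" for a
    using C[OF that] \<open>0 \<le> D\<close> by (simp add: mult_left_mono)
  have "kl_bernoulli (\<integral>a. X a \<partial>w) (\<integral>a. Y a \<partial>w) \<le> (\<integral>a. kl_bernoulli (X a) (Y a) \<partial>w)"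
    by (rule kl_bernoulli_integral_le[where B="D * B"]) (use XY DC in \<open>blast, fastforce\<close>)
  also have "\<dots> \<le> (\<integral>a. D * C a \<partial>w)"
  proof (rule integral_mono_AE)
    show "integrable w (\<lambda>a. kl_bernoulli (X a) (Y a))"
      by (rule integrable_pmf_bounded[where B="D * B"])
        (use XY DC kl_bernoulli_nonneg in \<open>fastforce\<close>)
    show "integrable w (\<lambda>a. D * C a)"
      by (rule integrable_pmf_bounded[where B="D * B"]) (use DC C \<open>0 \<le> D\<close> in auto)
  qed (use XY in \<open>auto simp: AE_measure_pmf_iff\<close>)
  finally show "kl_bernoulli (\<integral>a. X a \<partial>w) (\<integral>a. Y a \<partial>w) \<le> D * (\<integral>a. C a \<partial>w)" by simp
qed

section \<open>Change of measure along a run of the algorithm\<close>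

definition run_from :: "(nat \<Rightarrow> real) \<Rightarrow> policy \<Rightarrow> state \<Rightarrow> nat \<Rightarrow> state pmf" where
  "run_from \<mu> pol s N = ((\<lambda>p. bind_pmf p (step \<mu> pol)) ^^ N) (return_pmf s)"

definition outcome :: "(nat \<Rightarrow> real) \<Rightarrow> history \<Rightarrow> action \<Rightarrow> state pmf" where
  "outcome \<mu> h a = (case a of
      Stop S \<Rightarrow> return_pmf (h, Some S)
    | Pull i \<Rightarrow> map_pmf (\<lambda>r. (h @ [(i, r)], None)) (bernoulli_pmf (\<mu> i)))"

definition discarded :: "nat \<Rightarrow> state set" where
  "discarded i = {s. \<exists>S. snd s = Some S \<and> i \<notin> S}"

definition retained :: "nat \<Rightarrow> state set" where
  "retained i = {s. \<exists>S. snd s = Some S \<and> i \<in> S}"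

definition stopped :: "state set" where
  "stopped = {s. snd s \<noteq> None}"

definition discard_prob :: "(nat \<Rightarrow> real) \<Rightarrow> policy \<Rightarrow> nat \<Rightarrow> nat \<Rightarrow> state \<Rightarrow> real" where
  "discard_prob \<mu> pol i N s = measure_pmf.prob (run_from \<mu> pol s N) (discarded i)"

definition just_pulled :: "nat \<Rightarrow> state \<Rightarrow> bool" where
  "just_pulled i s \<longleftrightarrow> snd s = None \<and> fst s \<noteq> [] \<and> fst (last (fst s)) = i"

primrec expected_pulls :: "(nat \<Rightarrow> real) \<Rightarrow> policy \<Rightarrow> nat \<Rightarrow> nat \<Rightarrow> state \<Rightarrow> real" where
  "expected_pulls \<mu> pol i 0 s = 0"
| "expected_pulls \<mu> pol i (Suc N) s =
     (\<integral>s'. of_bool (just_pulled i s') + expected_pulls \<mu> pol i N s' \<partial>step \<mu> pol s)"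

lemma run_eq_run_from: "run \<mu> pol N = run_from \<mu> pol ([], None) N"
  unfolding run_def run_from_def ..

lemma run_Suc: "run \<mu> pol (Suc N) = bind_pmf (run \<mu> pol N) (step \<mu> pol)"
  unfolding run_def by simp

lemma run_from_Suc: "run_from \<mu> pol s (Suc N) = bind_pmf (step \<mu> pol s) (\<lambda>s'. run_from \<mu> pol s' N)"
proof -
  let ?F = "\<lambda>p. bind_pmf p (step \<mu> pol)"
  have commute: "(?F ^^ n) (bind_pmf p f) = bind_pmf p (\<lambda>x. (?F ^^ n) (f x))" for n p f
    by (induction n) (simp_all add: bind_assoc_pmf)
  have "run_from \<mu> pol s (Suc N) = (?F ^^ N) (bind_pmf (step \<mu> pol s) return_pmf)"
    unfolding run_from_def funpow_Suc_right by (simp add: bind_return_pmf bind_return_pmf')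
  then show ?thesis unfolding commute run_from_def .
qed

lemma run_from_1: "run_from \<mu> pol s (Suc 0) = step \<mu> pol s"
  by (simp add: run_from_Suc run_from_def bind_return_pmf bind_return_pmf')

lemma step_stopped: "step \<mu> pol (h, Some S) = return_pmf (h, Some S)"
  unfolding step_def by simp

lemma step_running: "step \<mu> pol (h, None) = bind_pmf (pol h) (outcome \<mu> h)"
  unfolding step_def outcome_def by simp

lemma integral_outcome_Pull:
  fixes f :: "state \<Rightarrow> real"
  assumes "0 \<le> \<mu> j" "\<mu> j \<le> 1"
  shows "(\<integral>s. f s \<partial>outcome \<mu> h (Pull j))
           = \<mu> j * f (h @ [(j, True)], None) + (1 - \<mu> j) * f (h @ [(j, False)], None)"
  using assms by (simp add: outcome_def mult.commute)

lemma discard_prob_bounds: "0 \<le> discard_prob \<mu> pol i N s \<and> discard_prob \<mu> pol i N s \<le> 1"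
  unfolding discard_prob_def by simp

lemma discard_prob_Suc:
  "discard_prob \<mu> pol i (Suc N) s = (\<integral>s'. discard_prob \<mu> pol i N s' \<partial>step \<mu> pol s)"
  unfolding discard_prob_def run_from_Suc prob_bind_pmf ..

lemma expected_pulls_bounds: "0 \<le> expected_pulls \<mu> pol i N s \<and> expected_pulls \<mu> pol i N s \<le> real N"
proof (induction N arbitrary: s)
  case (Suc N)
  have "0 \<le> of_bool (just_pulled i s') + expected_pulls \<mu> pol i N s' \<and>
      of_bool (just_pulled i s') + expected_pulls \<mu> pol i N s' \<le> real (Suc N)" for s'
    using Suc.IH[of s'] by auto
  then show ?case
    unfolding expected_pulls.simps by (rule integral_pmf_bounds)
qed simp

text \<open>A single decision: pulling arm \<open>j\<close> mixes two continuations with weights \<open>\<mu> j\<close> and \<open>\<nu> j\<close>;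
  by the chain rule this adds \<open>kl_bernoulli (\<mu> j) (\<nu> j)\<close>, which vanishes unless \<open>j = i\<close>.\<close>
lemma kl_bernoulli_outcome_le:
  fixes f g c :: "state \<Rightarrow> real"
  assumes \<mu>: "\<And>j. 0 < \<mu> j \<and> \<mu> j < 1" and \<nu>: "\<And>j. 0 < \<nu> j \<and> \<nu> j < 1"
    and agree: "\<And>j. j \<noteq> i \<Longrightarrow> \<mu> j = \<nu> j" and D: "kl_bernoulli (\<mu> i) (\<nu> i) \<le> D"
    and fg: "\<And>s. bernoulli_abs_cont (f s) (g s) \<and> kl_bernoulli (f s) (g s) \<le> D * c s"
  shows "bernoulli_abs_cont (\<integral>s. f s \<partial>outcome \<mu> h a) (\<integral>s. g s \<partial>outcome \<nu> h a) \<and>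
    kl_bernoulli (\<integral>s. f s \<partial>outcome \<mu> h a) (\<integral>s. g s \<partial>outcome \<nu> h a)
      \<le> D * (\<integral>s. of_bool (just_pulled i s) + c s \<partial>outcome \<mu> h a)"
proof (cases a)
  case (Stop S)
  then show ?thesis using fg[of "(h, Some S)"] by (simp add: outcome_def just_pulled_def)
next
  case (Pull j)
  let ?s = "\<lambda>b. (h @ [(j, b)], None) :: state"
  have pj: "0 < \<mu> j" "\<mu> j < 1" and qj: "0 < \<nu> j" "\<nu> j < 1" using \<mu> \<nu> by auto
  have integrals:
    "(\<integral>s. f s \<partial>outcome \<mu> h a) = \<mu> j * f (?s True) + (1 - \<mu> j) * f (?s False)"
    "(\<integral>s. g s \<partial>outcome \<nu> h a) = \<nu> j * g (?s True) + (1 - \<nu> j) * g (?s False)"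
    "(\<integral>s. of_bool (just_pulled i s) + c s \<partial>outcome \<mu> h a)
       = of_bool (j = i) + \<mu> j * c (?s True) + (1 - \<mu> j) * c (?s False)"
    unfolding Pull using pj qj
    by (simp_all add: integral_outcome_Pull just_pulled_def algebra_simps)
  have "kl_bernoulli (\<mu> j) (\<nu> j) \<le> of_bool (j = i) * D"
    using D agree[of j] by (cases "j = i") auto
  moreover have "\<mu> j * kl_bernoulli (f (?s True)) (g (?s True)) \<le> \<mu> j * (D * c (?s True))"
    "(1 - \<mu> j) * kl_bernoulli (f (?s False)) (g (?s False)) \<le> (1 - \<mu> j) * (D * c (?s False))"
    using fg pj by (simp_all add: mult_left_mono)
  moreover have "kl_bernoulli (\<integral>s. f s \<partial>outcome \<mu> h a) (\<integral>s. g s \<partial>outcome \<nu> h a)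
     \<le> kl_bernoulli (\<mu> j) (\<nu> j) + \<mu> j * kl_bernoulli (f (?s True)) (g (?s True))
        + (1 - \<mu> j) * kl_bernoulli (f (?s False)) (g (?s False))"
    unfolding integrals by (rule kl_bernoulli_mixture_le) (use pj qj fg in auto)
  moreover have "bernoulli_abs_cont (\<integral>s. f s \<partial>outcome \<mu> h a) (\<integral>s. g s \<partial>outcome \<nu> h a)"
    unfolding integrals by (rule bernoulli_abs_cont_mixture) (use pj qj fg in auto)
  ultimately show ?thesis unfolding integrals by (simp add: algebra_simps)
qed

lemma kl_bernoulli_discard_prob_le:
  assumes \<mu>: "\<And>j. 0 < \<mu> j \<and> \<mu> j < 1" and \<nu>: "\<And>j. 0 < \<nu> j \<and> \<nu> j < 1"
    and agree: "\<And>j. j \<noteq> i \<Longrightarrow> \<mu> j = \<nu> j" and D: "kl_bernoulli (\<mu> i) (\<nu> i) \<le> D"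
  shows "bernoulli_abs_cont (discard_prob \<mu> pol i N s) (discard_prob \<nu> pol i N s) \<and>
    kl_bernoulli (discard_prob \<mu> pol i N s) (discard_prob \<nu> pol i N s) \<le> D * expected_pulls \<mu> pol i N s"
proof (induction N arbitrary: s)
  case 0
  show ?case by (simp add: discard_prob_def run_from_def bernoulli_abs_cont_def)
next
  case (Suc N)
  obtain h opt where s: "s = (h, opt)" by (cases s)
  show ?case
  proof (cases opt)
    case (Some S)
    then show ?thesis
      using Suc.IH[of s] by (simp add: s discard_prob_Suc step_stopped just_pulled_def)
  next
    case None
    have "bernoulli_abs_cont (\<mu> i) (\<nu> i)"
      using \<mu>[of i] \<nu>[of i] by (simp add: bernoulli_abs_cont_def)
    then have "0 \<le> D" using D kl_bernoulli_nonneg by fastforce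
    have bounded: "0 \<le> of_bool (just_pulled i s') + expected_pulls \<mu> pol i N s' \<and>
        of_bool (just_pulled i s') + expected_pulls \<mu> pol i N s' \<le> real N + 1" for s'
      using expected_pulls_bounds[of \<mu> pol i N s'] by auto
    have step_bounded:
      "0 \<le> (\<integral>s'. of_bool (just_pulled i s') + expected_pulls \<mu> pol i N s' \<partial>outcome \<mu> h a) \<and>
       (\<integral>s'. of_bool (just_pulled i s') + expected_pulls \<mu> pol i N s' \<partial>outcome \<mu> h a) \<le> real N + 1"
      for a by (rule integral_pmf_bounds) (use bounded in blast)
    have bound: "bernoulli_abs_cont (\<integral>a. \<integral>s'. discard_prob \<mu> pol i N s' \<partial>outcome \<mu> h a \<partial>pol h)
                             (\<integral>a. \<integral>s'. discard_prob \<nu> pol i N s' \<partial>outcome \<nu> h a \<partial>pol h) \<and>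
      kl_bernoulli (\<integral>a. \<integral>s'. discard_prob \<mu> pol i N s' \<partial>outcome \<mu> h a \<partial>pol h)
                   (\<integral>a. \<integral>s'. discard_prob \<nu> pol i N s' \<partial>outcome \<nu> h a \<partial>pol h)
      \<le> D * (\<integral>a. \<integral>s'. of_bool (just_pulled i s') + expected_pulls \<mu> pol i N s' \<partial>outcome \<mu> h a \<partial>pol h)"
      by (rule kl_bernoulli_integral_bound[where B="real N + 1"])
        (use kl_bernoulli_outcome_le[where \<mu>=\<mu> and \<nu>=\<nu> and i=i and D=D,
               OF \<mu> \<nu> agree D Suc.IH] \<open>0 \<le> D\<close> step_bounded in auto)
    have "discard_prob \<mu>' pol i (Suc N) s
        = (\<integral>a. \<integral>s'. discard_prob \<mu>' pol i N s' \<partial>outcome \<mu>' h a \<partial>pol h)" for \<mu>'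
      unfolding discard_prob_Suc s None step_running
      by (rule integral_bind_pmf_bounded[where B=1]) (use discard_prob_bounds in auto)
    moreover have "expected_pulls \<mu> pol i (Suc N) s
        = (\<integral>a. \<integral>s'. of_bool (just_pulled i s') + expected_pulls \<mu> pol i N s' \<partial>outcome \<mu> h a \<partial>pol h)"
      unfolding expected_pulls.simps s None step_running
      by (rule integral_bind_pmf_bounded[where B="real N + 1"]) (use bounded in auto)
    ultimately show ?thesis using bound by simp
  qed
qed

section \<open>Divergence between the instances\<close>

lemma ln_one_plus_le: "0 \<le> b \<Longrightarrow> ln (1 + b) \<le> b - b^2 / 2 + b^3 / (3::real)"
proof -
  let ?h = "\<lambda>x::real. x - x^2 / 2 + x^3 / 3 - ln (1 + x)"
  assume b: "0 \<le> b"
  have "?h 0 \<le> ?h b"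
  proof (rule DERIV_nonneg_imp_nondecreasing[OF b])
    fix x :: real assume x: "0 \<le> x" "x \<le> b"
    have "(?h has_real_derivative 1 - x + x^2 - 1 / (1 + x)) (at x)"
      using x by (auto intro!: derivative_eq_intros simp: power2_eq_square)
    moreover have "1 - x + x^2 - 1 / (1 + x) = x^3 / (1 + x)"
      using x by (simp add: field_simps power2_eq_square power3_eq_cube)
    ultimately show "\<exists>y. (?h has_real_derivative y) (at x) \<and> 0 \<le> y" using x by auto
  qed
  then show ?thesis by simp
qed

lemma ln_le_quadratic: "0 < x \<Longrightarrow> x \<le> 1 \<Longrightarrow> ln x \<le> (x - 1) - (x - 1)^2 / (2::real)"
proof -
  let ?h = "\<lambda>t::real. (t - 1) - (t - 1)^2 / 2 - ln t"
  assume x: "0 < x" "x \<le> 1"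
  have "?h 1 \<le> ?h x"
  proof (rule DERIV_nonpos_imp_nonincreasing[OF x(2)])
    fix t :: real assume t: "x \<le> t" "t \<le> 1"
    have "(?h has_real_derivative 1 - (t - 1) - 1 / t) (at t)"
      using t x by (auto intro!: derivative_eq_intros simp: power2_eq_square field_simps)
    moreover have "1 - (t - 1) - 1 / t = - ((t - 1)^2 / t)"
      using t x by (simp add: field_simps power2_eq_square)
    ultimately show "\<exists>y. (?h has_real_derivative y) (at t) \<and> y \<le> 0" using t x by auto
  qed
  then show ?thesis by simp
qed

lemma kl_shift_expansion_le:
  fixes q s d :: real
  assumes q: "1/2 \<le> q" and s: "1/4 \<le> s" and d: "0 < d" "d \<le> 1/8"
  shows "d^2 / (2 * q) + d^2 / (2 * s) + d^3 / (2 * q^2) - d^3 / (6 * s^2) + d^4 / (3 * s^3) \<le> 4 * d^2"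
proof -
  have "d^2 / (2 * q) \<le> d^2 / 1" using q by (intro divide_left_mono) auto
  moreover have "d^2 / (2 * s) \<le> d^2 / (1/2)" using s by (intro divide_left_mono) auto
  ultimately have "d^2 / (2 * q) \<le> d^2" "d^2 / (2 * s) \<le> 2 * d^2" by simp_all
  moreover have "d^3 / (2 * q^2) \<le> d^2 / 4"
  proof -
    have "1/2 \<le> 2 * q^2" using power_mono[OF q, of 2] by (simp add: power2_eq_square)
    then have "d^3 / (2 * q^2) \<le> d^3 / (1/2)" using d by (intro divide_left_mono) auto
    also have "\<dots> = d^2 * (2 * d)" by (simp add: power3_eq_cube power2_eq_square)
    also have "\<dots> \<le> d^2 * (1/4)" using d by (intro mult_left_mono) auto
    finally show ?thesis by simp
  qed
  moreover have "d^4 / (3 * s^3) \<le> d^2 / 3"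
  proof -
    have "3/64 \<le> 3 * s^3" using power_mono[OF s, of 3] by (simp add: power3_eq_cube)
    then have "d^4 / (3 * s^3) \<le> d^4 / (3/64)" using d s by (intro divide_left_mono) auto
    also have "\<dots> = d^2 * (64 * d^2 / 3)" by (simp add: eval_nat_numeral)
    also have "\<dots> \<le> d^2 * (1/3)"
      using d power_mono[OF d(2), of 2] by (intro mult_left_mono) (auto simp: power2_eq_square)
    finally show ?thesis by simp
  qed
  moreover have "0 \<le> d^3 / (6 * s^2)" "0 \<le> d^2" using d s by simp_all
  ultimately show ?thesis by linarith
qed

lemma kl_bernoulli_shift_le:
  fixes q d :: real
  assumes q: "1/2 \<le> q" "q \<le> 3/4" and d: "0 < d" "d \<le> 1/8"
  shows "kl_bernoulli (q - d) q \<le> 4 * d^2"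
proof -
  define s where "s = 1 - q"
  have s: "1/4 \<le> s" using q by (simp add: s_def)
  have "kl_bernoulli (q - d) q = (q - d) * ln ((q - d) / q) + (s + d) * ln (1 + d / s)"
  proof -
    have "(1 - (q - d)) / (1 - q) = 1 + d / s" using s by (simp add: s_def field_simps)
    then show ?thesis by (simp add: kl_bernoulli_def kl_term_def s_def)
  qed
  also have "\<dots> \<le> (q - d) * (- d / q - d^2 / (2 * q^2)) + (s + d) * (d / s - (d / s)^2 / 2 + (d / s)^3 / 3)"
  proof (intro add_mono mult_left_mono)
    show "ln ((q - d) / q) \<le> - d / q - d^2 / (2 * q^2)"
      using ln_le_quadratic[of "(q - d) / q"] q d by (simp add: field_simps power2_eq_square)
    show "ln (1 + d / s) \<le> d / s - (d / s)^2 / 2 + (d / s)^3 / 3"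
      using ln_one_plus_le[of "d / s"] d s by simp
  qed (use q d s in auto)
  also have "\<dots> = d^2 / (2 * q) + d^2 / (2 * s) + d^3 / (2 * q^2) - d^3 / (6 * s^2) + d^4 / (3 * s^3)"
    using q s by (simp add: field_simps power2_eq_square power3_eq_cube eval_nat_numeral)
  also have "\<dots> \<le> 4 * d^2"
    by (rule kl_shift_expansion_le) (use q s d in auto)
  finally show ?thesis .
qed

lemma rho_param_bounds:
  assumes "3 \<le> n" "0 < \<epsilon>" "\<epsilon> \<le> 1 / (8 * (real n - 1))"
  shows "(real n - 1) * \<epsilon> \<le> 1/8" "\<epsilon> \<le> 1/16"
proof -
  have n: "2 \<le> real n - 1" using assms(1) by simp
  then show "(real n - 1) * \<epsilon> \<le> 1/8" using assms(3) by (simp add: field_simps)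
  moreover have "2 * \<epsilon> \<le> (real n - 1) * \<epsilon>" using n assms(2) by (intro mult_right_mono) auto
  ultimately show "\<epsilon> \<le> 1/16" by linarith
qed

lemma rho_in_unit_interval:
  assumes "3 \<le> n" "0 < \<epsilon>" "\<epsilon> \<le> 1 / (8 * (real n - 1))"
  shows "0 < rho n \<epsilon> i j \<and> rho n \<epsilon> i j < 1"
proof -
  have "(real n - 1) * \<epsilon> \<le> 1/8" "\<epsilon> \<le> 1/16" by (rule rho_param_bounds[OF assms])+
  moreover have "0 \<le> (real n - 1) * \<epsilon>" using assms by simp
  moreover have "(real n + 1) * \<epsilon> = (real n - 1) * \<epsilon> + 2 * \<epsilon>" by (simp add: algebra_simps)
  ultimately have "0 < 1/2 + c * \<epsilon> \<and> 1/2 + c * \<epsilon> < 1" if "real n - 1 \<le> c" "c \<le> real n + 1" for c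
    using mult_right_mono[OF that(1), of \<epsilon>] mult_right_mono[OF that(2), of \<epsilon>] assms(2)
    by linarith
  then show ?thesis unfolding rho_def by auto
qed

lemma rho_agree: "i \<noteq> 1 \<Longrightarrow> j \<noteq> i \<Longrightarrow> rho n \<epsilon> 1 j = rho n \<epsilon> i j"
  unfolding rho_def by auto

lemma kl_bernoulli_rho_le:
  assumes "3 \<le> n" "0 < \<epsilon>" "\<epsilon> \<le> 1 / (8 * (real n - 1))" and "i \<noteq> 1"
  shows "kl_bernoulli (rho n \<epsilon> 1 i) (rho n \<epsilon> i i) \<le> 16 * \<epsilon>^2"
proof -
  define q where "q = 1/2 + (real n + 1) * \<epsilon>"
  have "(real n - 1) * \<epsilon> \<le> 1/8" "\<epsilon> \<le> 1/16" by (rule rho_param_bounds[OF assms(1-3)])+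
  moreover have "0 \<le> (real n - 1) * \<epsilon>" using assms by simp
  ultimately have "kl_bernoulli (q - 2 * \<epsilon>) q \<le> 4 * (2 * \<epsilon>)^2"
    using assms(2) by (intro kl_bernoulli_shift_le) (auto simp: q_def algebra_simps)
  moreover have "rho n \<epsilon> 1 i = q - 2 * \<epsilon>" "rho n \<epsilon> i i = q"
    using assms(4) unfolding rho_def q_def by (simp_all add: algebra_simps)
  ultimately show ?thesis by (simp add: power2_eq_square)
qed

section \<open>Discarded and retained arms\<close>

lemma prob_run_mono:
  assumes "B \<subseteq> stopped" "N \<le> M"
  shows "measure_pmf.prob (run \<mu> pol N) B \<le> measure_pmf.prob (run \<mu> pol M) B"
proof -
  have "measure_pmf.prob (run \<mu> pol N) B \<le> measure_pmf.prob (run \<mu> pol (Suc N)) B" for N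
  proof -
    have "indicator B s \<le> measure_pmf.prob (step \<mu> pol s) B" for s
    proof (cases "s \<in> B")
      case True
      then obtain h S where "s = (h, Some S)" using assms(1) unfolding stopped_def by (cases s) auto
      then show ?thesis using True by (simp add: step_stopped)
    qed simp
    then have "(\<integral>s. indicator B s \<partial>run \<mu> pol N) \<le> (\<integral>s. measure_pmf.prob (step \<mu> pol s) B \<partial>run \<mu> pol N)"
      by (intro integral_mono integrable_pmf_bounded[where B=1]) auto
    then show ?thesis unfolding run_Suc prob_bind_pmf by simp
  qed
  then have "incseq (\<lambda>N. measure_pmf.prob (run \<mu> pol N) B)" by (rule incseq_SucI)
  then show ?thesis using assms(2) by (simp add: incseq_def)
qed

lemma retain_prob_limit:
  "(\<lambda>N. measure_pmf.prob (run \<mu> pol N) (retained b)) \<longlonglongrightarrow> retain_prob \<mu> pol b"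
  unfolding retain_prob_def retained_def[symmetric]
proof (rule LIMSEQ_incseq_SUP)
  show "incseq (\<lambda>N. measure_pmf.prob (run \<mu> pol N) (retained b))"
    by (intro monoI prob_run_mono) (auto simp: retained_def stopped_def)
qed (auto intro!: bdd_aboveI[where M=1])

lemma discard_prob_le_of_retain_prob:
  assumes "1 - \<delta> \<le> retain_prob \<mu> pol i"
  shows "measure_pmf.prob (run \<mu> pol N) (discarded i) \<le> \<delta>"
proof -
  have "measure_pmf.prob (run \<mu> pol N) (discarded i) + measure_pmf.prob (run \<mu> pol M) (retained i) \<le> 1"
    if "N \<le> M" for M
  proof -
    have "discarded i \<inter> retained i = {}" by (auto simp: discarded_def retained_def)
    then have "measure_pmf.prob (run \<mu> pol M) (discarded i) + measure_pmf.prob (run \<mu> pol M) (retained i)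
        = measure_pmf.prob (run \<mu> pol M) (discarded i \<union> retained i)"
      by (simp add: measure_pmf.finite_measure_Union)
    moreover have "measure_pmf.prob (run \<mu> pol N) (discarded i) \<le> measure_pmf.prob (run \<mu> pol M) (discarded i)"
      using that by (intro prob_run_mono) (auto simp: discarded_def stopped_def)
    moreover have "measure_pmf.prob (run \<mu> pol M) (discarded i \<union> retained i) \<le> 1" by simp
    ultimately show ?thesis by linarith
  qed
  then have "measure_pmf.prob (run \<mu> pol N) (discarded i) + retain_prob \<mu> pol i \<le> 1"
    by (intro LIMSEQ_le_const2[OF tendsto_add[OF tendsto_const retain_prob_limit]]) auto
  then show ?thesis using assms by linarith
qed

lemma run_stop_set_card:
  assumes "valid_policy k m pol" "s \<in> set_pmf (run \<mu> pol N)" "snd s = Some S"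
  shows "card S = m"
  using assms(2,3)
proof (induction N arbitrary: s)
  case 0
  then show ?case by (simp add: run_def)
next
  case (Suc N)
  then obtain h opt where s0: "(h, opt) \<in> set_pmf (run \<mu> pol N)" "s \<in> set_pmf (step \<mu> pol (h, opt))"
    by (auto simp: run_Suc)
  show ?case
  proof (cases opt)
    case Some
    then show ?thesis using s0 Suc by (auto simp: step_stopped)
  next
    case None
    then obtain a where a: "a \<in> set_pmf (pol h)" "s \<in> set_pmf (outcome \<mu> h a)"
      using s0(2) by (auto simp: step_running)
    then show ?thesis
      using assms(1) Suc.prems(2) unfolding valid_policy_def
      by (cases a) (fastforce simp: outcome_def)+
  qed
qed

lemma card_discarded_ge:
  assumes "finite S" "card S = m" "2 \<le> k"
  shows "real k - 1 - real m + of_bool (1 \<in> S) \<le> real (card ({2..k} - S))"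
proof -
  have "card ({2..k} \<inter> S) + card ({1} \<inter> S) = card ({2..k} \<inter> S \<union> {1} \<inter> S)"
    by (rule card_Un_disjoint[symmetric]) auto
  also have "\<dots> \<le> m" using assms by (auto intro: card_mono)
  finally have "card ({2..k} \<inter> S) + of_bool (1 \<in> S) \<le> m" by (cases "1 \<in> S") auto
  moreover have "card ({2..k} - S) = (k - 1) - card ({2..k} \<inter> S)"
    by (simp add: card_Diff_subset_Int)
  moreover have "card ({2..k} \<inter> S) \<le> k - 1" using card_mono[of "{2..k}" "{2..k} \<inter> S"] by auto
  ultimately show ?thesis using assms(3) by (cases "1 \<in> S") (auto simp: of_nat_diff)
qed

text \<open>When the algorithm stops it keeps exactly \<open>m\<close> arms, so at least \<open>k - 1 - m\<close> suboptimal arms are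
  discarded, and one more unless arm 1 is discarded.\<close>
lemma sum_discard_prob_ge:
  assumes "valid_policy k m pol" "1 \<le> m" "2 \<le> k"
  shows "(real k - 1 - real m) * measure_pmf.prob (run \<mu> pol N) stopped
           + measure_pmf.prob (run \<mu> pol N) (retained 1)
         \<le> (\<Sum>i\<in>{2..k}. measure_pmf.prob (run \<mu> pol N) (discarded i))"
proof -
  let ?M = "run \<mu> pol N"
  have pointwise: "(real k - 1 - real m) * indicator stopped s + indicator (retained 1) s
      \<le> (\<Sum>i\<in>{2..k}. indicator (discarded i) s)" if s: "s \<in> set_pmf ?M" for s
  proof (cases "snd s")
    case (Some S)
    have "card S = m" by (rule run_stop_set_card[OF assms(1) s Some])
    then have "finite S" using assms(2) by (metis card.infinite not_one_le_zero)
    have "(\<Sum>i\<in>{2..k}. indicator (discarded i) s :: real) = real (card ({2..k} - S))"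
      using Some by (simp add: indicator_def discarded_def of_bool_def[symmetric] Diff_eq Int_def)
    then show ?thesis
      using card_discarded_ge[OF \<open>finite S\<close> \<open>card S = m\<close> assms(3)] Some
      by (simp add: indicator_def stopped_def retained_def)
  qed (simp add: indicator_def stopped_def retained_def)
  have indicator_integrable: "integrable ?M (indicator A :: state \<Rightarrow> real)" for A
    by (rule integrable_pmf_bounded[where B=1]) (simp add: indicator_def)
  have "integrable ?M (\<lambda>s. \<Sum>i\<in>{2..k}. indicator (discarded i) s :: real)"
    "integrable ?M (\<lambda>s. (real k - 1 - real m) * indicator stopped s + indicator (retained 1) s)"
    using indicator_integrable by auto
  then have "(\<integral>s. (real k - 1 - real m) * indicator stopped s + indicator (retained 1) s \<partial>?M)
      \<le> (\<integral>s. (\<Sum>i\<in>{2..k}. indicator (discarded i) s) \<partial>?M)"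
    using pointwise by (intro integral_mono_AE) (auto simp: AE_measure_pmf_iff)
  moreover have "(\<integral>s. (\<Sum>i\<in>{2..k}. indicator (discarded i) s) \<partial>?M)
      = (\<Sum>i\<in>{2..k}. measure_pmf.prob ?M (discarded i))"
    using indicator_integrable by (subst Bochner_Integration.integral_sum) auto
  moreover have "(\<integral>s. (real k - 1 - real m) * indicator stopped s + indicator (retained 1) s \<partial>?M)
      = (real k - 1 - real m) * measure_pmf.prob ?M stopped + measure_pmf.prob ?M (retained 1)"
    using indicator_integrable by (subst Bochner_Integration.integral_add) auto
  ultimately show ?thesis by simp
qed

lemma sum_just_pulled_le:
  assumes "finite I"
  shows "(\<Sum>i\<in>I. of_bool (just_pulled i s) :: real) \<le> of_bool (snd s = None)"
proof -
  have "(\<Sum>i\<in>I. of_bool (just_pulled i s) :: real)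
      = (\<Sum>i\<in>I. if fst (last (fst s)) = i then of_bool (snd s = None \<and> fst s \<noteq> []) else 0)"
    by (rule sum.cong) (auto simp: just_pulled_def)
  also have "\<dots> \<le> of_bool (snd s = None)"
    using assms by (simp add: sum.delta)
  finally show ?thesis .
qed

lemma sum_expected_pulls_le:
  assumes "finite I"
  shows "(\<Sum>i\<in>I. expected_pulls \<mu> pol i N s)
           \<le> (\<Sum>t<N. measure_pmf.prob (run_from \<mu> pol s (Suc t)) {s. snd s = None})"
proof (induction N arbitrary: s)
  case (Suc N)
  let ?T = "\<lambda>s'. \<Sum>t<N. measure_pmf.prob (run_from \<mu> pol s' (Suc t)) {s. snd s = None}"
  have "\<bar>of_bool (just_pulled i s') + expected_pulls \<mu> pol i N s'\<bar> \<le> real N + 1" for i s'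
    using expected_pulls_bounds[of \<mu> pol i N s'] by (cases "just_pulled i s'") auto
  then have pulls_integrable:
    "integrable (step \<mu> pol s) (\<lambda>s'. of_bool (just_pulled i s') + expected_pulls \<mu> pol i N s')" for i
    by (intro integrable_pmf_bounded)
  have indicator_integrable: "integrable (step \<mu> pol s) (indicator A :: state \<Rightarrow> real)" for A
    by (rule integrable_pmf_bounded[where B=1]) (simp add: indicator_def)
  have T_integrable: "integrable (step \<mu> pol s) (\<lambda>s'. measure_pmf.prob (run_from \<mu> pol s' (Suc t)) A)"
    for t A by (rule integrable_pmf_bounded[where B=1]) simp
  have "(\<Sum>i\<in>I. expected_pulls \<mu> pol i (Suc N) s)
      = (\<integral>s'. (\<Sum>i\<in>I. of_bool (just_pulled i s')) + (\<Sum>i\<in>I. expected_pulls \<mu> pol i N s') \<partial>step \<mu> pol s)"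
    using pulls_integrable by (simp add: Bochner_Integration.integral_sum[symmetric] sum.distrib)
  also have "\<dots> \<le> (\<integral>s'. indicator {s. snd s = None} s' + ?T s' \<partial>step \<mu> pol s)"
  proof (rule integral_mono)
    show "(\<Sum>i\<in>I. of_bool (just_pulled i s')) + (\<Sum>i\<in>I. expected_pulls \<mu> pol i N s')
        \<le> indicator {s. snd s = None} s' + ?T s'" for s'
      using sum_just_pulled_le[OF assms, of s'] Suc.IH[of s'] by (simp add: indicator_def)
    show "integrable (step \<mu> pol s)
        (\<lambda>s'. (\<Sum>i\<in>I. of_bool (just_pulled i s')) + (\<Sum>i\<in>I. expected_pulls \<mu> pol i N s'))"
      using pulls_integrable by (simp add: sum.distrib[symmetric])
    show "integrable (step \<mu> pol s) (\<lambda>s'. indicator {s. snd s = None} s' + ?T s')"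
      using indicator_integrable T_integrable by simp
  qed
  also have "\<dots> = measure_pmf.prob (step \<mu> pol s) {s. snd s = None}
      + (\<Sum>t<N. \<integral>s'. measure_pmf.prob (run_from \<mu> pol s' (Suc t)) {s. snd s = None} \<partial>step \<mu> pol s)"
    using indicator_integrable T_integrable
    by (simp add: Bochner_Integration.integral_add Bochner_Integration.integral_sum)
  also have "\<dots> = (\<Sum>t<Suc N. measure_pmf.prob (run_from \<mu> pol s (Suc t)) {s. snd s = None})"
    unfolding sum.lessThan_Suc_shift by (simp add: run_from_1 run_from_Suc[of \<mu> pol s "Suc _"] prob_bind_pmf)
  finally show ?case .
qed simp

lemma kl_bernoulli_ge_tangent:
  fixes x y \<alpha> \<delta> :: real
  assumes ac: "bernoulli_abs_cont x y" and "y \<le> \<delta>" "0 < \<delta>" "\<delta> < \<alpha>"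
  shows "\<delta> - \<alpha> + ln (\<alpha> / \<delta>) * x \<le> kl_bernoulli x y"
proof (cases "x \<le> \<delta>")
  case True
  have "ln (\<alpha> / \<delta>) * x \<le> ln (\<alpha> / \<delta>) * \<delta>"
    using True ac assms by (intro mult_left_mono) (auto simp: bernoulli_abs_cont_def)
  also have "\<dots> \<le> (\<alpha> / \<delta> - 1) * \<delta>"
    using assms by (intro mult_right_mono ln_le_minus_one) auto
  also have "\<dots> = \<alpha> - \<delta>" using assms by (simp add: field_simps)
  finally show ?thesis using kl_bernoulli_nonneg[OF ac] by linarith
next
  case False
  then have x: "0 < x" "\<delta> < x" and "0 < y"
    using ac \<open>0 < \<delta>\<close> unfolding bernoulli_abs_cont_def by auto
  have "x * ln (x / \<delta>) + x - y * x / \<delta> \<le> kl_term x y"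
    using ac x \<open>0 < \<delta>\<close> by (intro kl_term_ge_tangent) (auto simp: bernoulli_abs_cont_def)
  moreover have "y - x \<le> kl_term (1 - x) (1 - y)"
    using kl_term_ge_diff[of "1 - x" "1 - y"] ac by (simp add: bernoulli_abs_cont_def)
  moreover have "\<delta> * (1 - x / \<delta>) \<le> y * (1 - x / \<delta>)"
    using \<open>y \<le> \<delta>\<close> x \<open>0 < \<delta>\<close> by (intro mult_right_mono_neg) (auto simp: field_simps)
  moreover have "x - \<alpha> \<le> x * ln (x / \<alpha>)"
    using kl_term_ge_diff[of x \<alpha>] x \<open>\<delta> < \<alpha>\<close> \<open>0 < \<delta>\<close> by (simp add: kl_term_def)
  moreover have "x * ln (x / \<delta>) = x * ln (x / \<alpha>) + x * ln (\<alpha> / \<delta>)"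
    using x \<open>0 < \<delta>\<close> \<open>\<delta> < \<alpha>\<close> by (simp add: ln_div algebra_simps)
  ultimately show ?thesis
    using \<open>0 < \<delta>\<close> unfolding kl_bernoulli_def by (simp add: algebra_simps)
qed

lemma ln_ge_two_mult_div: "1 \<le> y \<Longrightarrow> 2 * (y - 1) / (y + 1) \<le> ln (y::real)"
proof -
  let ?h = "\<lambda>t::real. ln t + 4 / (t + 1)"
  assume y: "1 \<le> y"
  have "?h 1 \<le> ?h y"
  proof (rule DERIV_nonneg_imp_nondecreasing[OF y])
    fix t :: real assume t: "1 \<le> t" "t \<le> y"
    have "(?h has_real_derivative 1 / t - 4 / (t + 1)^2) (at t)"
      by (rule derivative_eq_intros refl | use t in force)+ (use t in \<open>simp add: power2_eq_square field_simps\<close>)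
    moreover have "1 / t - 4 / (t + 1)^2 = ((t + 1)^2 - 4 * t) / (t * (t + 1)^2)"
      using t by (simp add: diff_frac_eq)
    moreover have "(t + 1)^2 - 4 * t = (t - 1)^2" by (simp add: power2_eq_square algebra_simps)
    ultimately show "\<exists>z. (?h has_real_derivative z) (at t) \<and> 0 \<le> z" using t by auto
  qed
  moreover have "2 * (y - 1) / (y + 1) = 2 - 4 / (y + 1)" using y by (simp add: field_simps)
  ultimately show ?thesis by simp
qed

lemma tangent_gap_ge:
  fixes \<alpha> \<beta> \<delta> :: real
  assumes "0 < \<beta>" "\<beta> < 1" "0 < \<alpha>" "0 < \<delta>" "1 / (1 - \<beta>) \<le> \<alpha> / \<delta>"
  shows "\<beta> / 2 * (\<alpha> * ln (\<alpha> / \<delta>)) \<le> \<alpha> * ln (\<alpha> / \<delta>) - \<alpha> + \<delta>"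
proof -
  define y where "y = \<alpha> / \<delta>"
  have yb: "1 \<le> (1 - \<beta>) * y" using assms unfolding y_def by (simp add: field_simps)
  moreover have "(1 - \<beta>) * y < y" if "0 < y" using that assms by simp
  ultimately have y: "1 < y" by (smt (verit) mult_nonneg_nonpos assms(1,2))
  have "(y - 1) / y \<le> (2 - \<beta>) * (y - 1) / (y + 1)"
  proof -
    have "(y - 1) * (y + 1) \<le> (y - 1) * ((2 - \<beta>) * y)"
      using yb y by (intro mult_left_mono) (auto simp: algebra_simps)
    then show ?thesis using y by (simp add: field_simps)
  qed
  also have "\<dots> = (1 - \<beta> / 2) * (2 * (y - 1) / (y + 1))" using y by (simp add: field_simps)
  also have "\<dots> \<le> (1 - \<beta> / 2) * ln y"
    using ln_ge_two_mult_div[of y] y assms by (intro mult_left_mono) auto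
  finally have "\<alpha> * ((y - 1) / y) \<le> \<alpha> * ((1 - \<beta> / 2) * ln y)"
    using assms by (intro mult_left_mono) auto
  moreover have "\<alpha> * ((y - 1) / y) = \<alpha> - \<delta>" using assms unfolding y_def by (simp add: field_simps)
  ultimately show ?thesis unfolding y_def by (simp add: algebra_simps)
qed

text \<open>\<open>E [min T N]\<close>, the truncation of \<^const>\<open>expected_T\<close>.\<close>
definition expected_T_upto :: "(nat \<Rightarrow> real) \<Rightarrow> policy \<Rightarrow> nat \<Rightarrow> real" where
  "expected_T_upto \<mu> pol N = (\<Sum>t<N. measure_pmf.prob (run \<mu> pol (Suc t)) {s. snd s = None})"

lemma expected_T_ge_limit:
  assumes "f \<longlonglongrightarrow> c" "\<And>N. f N \<le> expected_T_upto \<mu> pol N"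
  shows "ennreal c \<le> expected_T \<mu> pol"
proof (rule LIMSEQ_le_const2)
  show "(\<lambda>N. ennreal (f N)) \<longlonglongrightarrow> ennreal c" using assms(1) by (rule tendsto_ennrealI)
  have "ennreal (f N) \<le> expected_T \<mu> pol" for N
  proof -
    have "ennreal (f N) \<le> ennreal (expected_T_upto \<mu> pol N)" using assms(2) by (rule ennreal_leI)
    also have "\<dots> = (\<Sum>t<N. ennreal (measure_pmf.prob (run \<mu> pol (Suc t)) {s. snd s = None}))"
      unfolding expected_T_upto_def by (simp add: sum_ennreal)
    also have "\<dots> \<le> expected_T \<mu> pol"
      unfolding expected_T_def by (rule sum_le_suminf) auto
    finally show ?thesis .
  qed
  then show "\<exists>N. \<forall>n\<ge>N. ennreal (f n) \<le> expected_T \<mu> pol" by blast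
qed

lemma expected_T_ge_of_truncated:
  assumes bound: "\<And>N. c + a * measure_pmf.prob (run \<mu> pol N) stopped
                          + b * measure_pmf.prob (run \<mu> pol N) (retained r) \<le> D * expected_T_upto \<mu> pol N"
    and "0 < D" "0 \<le> b" "stops_as \<mu> pol" "1 - \<delta> \<le> retain_prob \<mu> pol r"
  shows "ennreal ((c + a + b * (1 - \<delta>)) / D) \<le> expected_T \<mu> pol"
proof -
  have "(\<lambda>N. (c + a * measure_pmf.prob (run \<mu> pol N) stopped + b * measure_pmf.prob (run \<mu> pol N) (retained r)) / D)
      \<longlonglongrightarrow> (c + a * 1 + b * retain_prob \<mu> pol r) / D"
    using assms(2,4) retain_prob_limit unfolding stops_as_def stopped_def by (intro tendsto_intros) auto
  then have "ennreal ((c + a * 1 + b * retain_prob \<mu> pol r) / D) \<le> expected_T \<mu> pol"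
    by (rule expected_T_ge_limit) (use bound \<open>0 < D\<close> in \<open>simp add: field_simps\<close>)
  moreover have "(c + a + b * (1 - \<delta>)) / D \<le> (c + a * 1 + b * retain_prob \<mu> pol r) / D"
    using assms by (intro divide_right_mono add_mono mult_left_mono) auto
  ultimately show ?thesis using ennreal_leI order.trans by metis
qed

lemma discard_prob_tangent_le:
  assumes n: "3 \<le> n" "0 < \<epsilon>" "\<epsilon> \<le> 1 / (8 * (real n - 1))" and "i \<noteq> 1"
    and pac: "1 - \<delta> \<le> retain_prob (rho n \<epsilon> i) pol i" and "0 < \<delta>" "\<delta> < \<alpha>"
  shows "\<delta> - \<alpha> + ln (\<alpha> / \<delta>) * measure_pmf.prob (run (rho n \<epsilon> 1) pol N) (discarded i)
           \<le> 16 * \<epsilon>^2 * expected_pulls (rho n \<epsilon> 1) pol i N ([], None)"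
proof -
  have "bernoulli_abs_cont (discard_prob (rho n \<epsilon> 1) pol i N ([], None)) (discard_prob (rho n \<epsilon> i) pol i N ([], None)) \<and>
    kl_bernoulli (discard_prob (rho n \<epsilon> 1) pol i N ([], None)) (discard_prob (rho n \<epsilon> i) pol i N ([], None))
      \<le> 16 * \<epsilon>^2 * expected_pulls (rho n \<epsilon> 1) pol i N ([], None)"
    using rho_in_unit_interval[OF n] rho_agree[OF \<open>i \<noteq> 1\<close>] kl_bernoulli_rho_le[OF n \<open>i \<noteq> 1\<close>]
    by (intro kl_bernoulli_discard_prob_le) auto
  moreover have "discard_prob (rho n \<epsilon> i) pol i N ([], None) \<le> \<delta>"
    unfolding discard_prob_def run_eq_run_from[symmetric] by (rule discard_prob_le_of_retain_prob[OF pac])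
  ultimately show ?thesis
    using kl_bernoulli_ge_tangent \<open>0 < \<delta>\<close> \<open>\<delta> < \<alpha>\<close>
    unfolding discard_prob_def run_eq_run_from[symmetric] by (meson order.trans)
qed

lemma truncated_lower_bound:
  assumes n: "3 \<le> n" "0 < \<epsilon>" "\<epsilon> \<le> 1 / (8 * (real n - 1))" and "2 \<le> k" "1 \<le> m"
    and "valid_policy k m pol" "PAC_I0 k n \<epsilon> \<delta> pol" and "0 < \<delta>" "\<delta> < \<alpha>"
  shows "(real k - 1) * (\<delta> - \<alpha>) + ln (\<alpha> / \<delta>) * ((real k - 1 - real m) * measure_pmf.prob (run (rho n \<epsilon> 1) pol N) stopped
           + measure_pmf.prob (run (rho n \<epsilon> 1) pol N) (retained 1))
         \<le> 16 * \<epsilon>^2 * expected_T_upto (rho n \<epsilon> 1) pol N"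
proof -
  let ?P = "measure_pmf.prob (run (rho n \<epsilon> 1) pol N)"
  have "0 \<le> ln (\<alpha> / \<delta>)" using assms by simp
  then have "(real k - 1) * (\<delta> - \<alpha>) + ln (\<alpha> / \<delta>) * ((real k - 1 - real m) * ?P stopped + ?P (retained 1))
      \<le> (\<Sum>i\<in>{2..k}. \<delta> - \<alpha> + ln (\<alpha> / \<delta>) * ?P (discarded i))"
    using sum_discard_prob_ge[OF assms(6,5,4), of "rho n \<epsilon> 1" N] \<open>2 \<le> k\<close>
    by (simp add: sum.distrib sum_distrib_left[symmetric] of_nat_diff mult_left_mono)
  also have "\<dots> \<le> (\<Sum>i\<in>{2..k}. 16 * \<epsilon>^2 * expected_pulls (rho n \<epsilon> 1) pol i N ([], None))"
    using assms unfolding PAC_I0_def by (intro sum_mono discard_prob_tangent_le) auto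
  also have "\<dots> \<le> 16 * \<epsilon>^2 * expected_T_upto (rho n \<epsilon> 1) pol N"
    using sum_expected_pulls_le[of "{2..k}" "rho n \<epsilon> 1" pol N "([], None)"]
    unfolding expected_T_upto_def run_eq_run_from sum_distrib_left[symmetric]
    by (intro mult_left_mono) auto
  finally show ?thesis .
qed

lemma pac_parameter_bounds:
  fixes k m :: nat
  assumes "2 \<le> k" "m < k" "0 < \<beta>" "\<beta> < 1" "0 < \<delta>" "\<delta> \<le> (real k - real m) / real k * (1 - \<beta>)"
  defines "\<alpha> \<equiv> (real k - real m - \<delta>) / (real k - 1)"
  shows "\<delta> < \<alpha>" "1 / (1 - \<beta>) \<le> \<alpha> / \<delta>"
proof -
  have km: "0 < real k - real m" and k: "0 < real k - 1" using assms by simp_all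
  have dk: "\<delta> * real k \<le> (real k - real m) * (1 - \<beta>)"
    using assms(1,6) by (simp add: field_simps)
  have "(real k - real m) * (1 - \<beta>) = (real k - real m) - (real k - real m) * \<beta>"
    by (simp add: algebra_simps)
  moreover have "0 < (real k - real m) * \<beta>" using km assms(3) by simp
  ultimately have "\<delta> * (real k - 1) < real k - real m - \<delta>"
    using dk by (simp add: algebra_simps)
  then show "\<delta> < \<alpha>" unfolding \<alpha>_def using k by (simp add: field_simps)
  have "0 \<le> \<delta> * \<beta>" using assms(3,5) by simp
  then have "(real k - 1) * \<delta> \<le> (1 - \<beta>) * (real k - real m - \<delta>)"
    using dk by (simp add: algebra_simps)
  then have "\<delta> \<le> (1 - \<beta>) * \<alpha>" unfolding \<alpha>_def using k by (simp add: field_simps)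
  then show "1 / (1 - \<beta>) \<le> \<alpha> / \<delta>" using assms(4,5) by (simp add: field_simps)
qed

lemma target_le_tangent_sum:
  fixes k m :: nat
  assumes "2 \<le> k" "0 < \<beta>" "\<beta> < 1" "0 < \<delta>" "\<delta> < \<alpha>" "1 / (1 - \<beta>) \<le> \<alpha> / \<delta>"
    and \<alpha>_def: "\<alpha> = (real k - real m - \<delta>) / (real k - 1)"
  shows "\<beta> / 32 * (real k - real m - \<delta>) / \<epsilon>^2 * ln ((real k - real m - \<delta>) / ((real k - 1) * \<delta>))
      \<le> ((real k - 1) * (\<delta> - \<alpha>) + ln (\<alpha> / \<delta>) * (real k - 1 - real m) + ln (\<alpha> / \<delta>) * (1 - \<delta>))
          / (16 * \<epsilon>^2)"
proof -
  let ?L = "ln (\<alpha> / \<delta>)"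
  have k: "0 < real k - 1" using assms(1) by simp
  then have k\<alpha>: "(real k - 1) * \<alpha> = real k - real m - \<delta>" by (simp add: \<alpha>_def)
  have "(real k - 1) * (\<beta> / 2 * (\<alpha> * ?L)) \<le> (real k - 1) * (\<alpha> * ?L - \<alpha> + \<delta>)"
    using tangent_gap_ge[of \<beta> \<alpha> \<delta>] k assms by (intro mult_left_mono) auto
  also have "\<dots> = (real k - 1) * (\<delta> - \<alpha>) + ?L * ((real k - 1) * \<alpha>)" by (simp add: algebra_simps)
  also have "\<dots> = (real k - 1) * (\<delta> - \<alpha>) + ?L * (real k - 1 - real m) + ?L * (1 - \<delta>)"
    unfolding k\<alpha> by (simp add: algebra_simps)
  finally have "(real k - 1) * (\<beta> / 2 * (\<alpha> * ?L)) / (16 * \<epsilon>^2)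
      \<le> ((real k - 1) * (\<delta> - \<alpha>) + ?L * (real k - 1 - real m) + ?L * (1 - \<delta>)) / (16 * \<epsilon>^2)"
    by (rule divide_right_mono) simp
  moreover have "(real k - real m - \<delta>) / ((real k - 1) * \<delta>) = \<alpha> / \<delta>"
    by (simp add: \<alpha>_def divide_divide_eq_left)
  ultimately show ?thesis unfolding k\<alpha>[symmetric] by (simp add: field_simps)
qed

theorem lemma4p3:
  fixes n k m :: nat and \<epsilon> \<beta> \<delta> :: real and pol :: policy
  assumes "n \<ge> 3" and "2 \<le> k" and "1 \<le> m" and "m < k"
    and "0 < \<epsilon>" and "\<epsilon> \<le> 1 / (8 * (real n - 1))"
    and "0 < \<beta>" and "\<beta> < 1"
    and "0 < \<delta>" and "\<delta> \<le> (real k - real m) / real k * (1 - \<beta>)"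
    and "valid_policy k m pol"
    and "\<forall>i \<in> {1..k}. stops_as (rho n \<epsilon> i) pol"
    and "PAC_I0 k n \<epsilon> \<delta> pol"
  shows "expected_T (rho n \<epsilon> 1) pol \<ge>
    ennreal (\<beta> / 32 * (real k - real m - \<delta>) / \<epsilon>^2
             * ln ((real k - real m - \<delta>) / ((real k - 1) * \<delta>)))"
proof -
  define \<alpha> where "\<alpha> = (real k - real m - \<delta>) / (real k - 1)"
  note \<alpha> = pac_parameter_bounds[OF assms(2,4,7-10), folded \<alpha>_def]
  let ?L = "ln (\<alpha> / \<delta>)"
  have "ennreal (((real k - 1) * (\<delta> - \<alpha>) + ?L * (real k - 1 - real m) + ?L * (1 - \<delta>)) / (16 * \<epsilon>^2))
      \<le> expected_T (rho n \<epsilon> 1) pol"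
  proof (rule expected_T_ge_of_truncated[where r=1])
    show "(real k - 1) * (\<delta> - \<alpha>) + ?L * (real k - 1 - real m) * measure_pmf.prob (run (rho n \<epsilon> 1) pol N) stopped
        + ?L * measure_pmf.prob (run (rho n \<epsilon> 1) pol N) (retained 1)
        \<le> 16 * \<epsilon>^2 * expected_T_upto (rho n \<epsilon> 1) pol N" for N
      using truncated_lower_bound[OF assms(1,5,6,2,3,11,13,9) \<alpha>(1), of N] by (simp add: algebra_simps)
  qed (use assms \<alpha> in \<open>auto simp: PAC_I0_def\<close>)
  moreover have "\<beta> / 32 * (real k - real m - \<delta>) / \<epsilon>^2 * ln ((real k - real m - \<delta>) / ((real k - 1) * \<delta>))
      \<le> ((real k - 1) * (\<delta> - \<alpha>) + ?L * (real k - 1 - real m) + ?L * (1 - \<delta>)) / (16 * \<epsilon>^2)"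
    by (rule target_le_tangent_sum) (use assms \<alpha> \<alpha>_def in auto)
  ultimately show ?thesis by (meson ennreal_leI order.trans)
qed

end
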